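(* If a mechanism $\varphi$ is separation monotonic, separation upper invariant, and separation lower invariant, then it is $L$-separation strategyproof for any $L\ge 2$.
   Context: Let $M$ be a finite set of alternatives. A preference order is a weak order $R$ on $M$ (strict part $P$), represented as $M_1 ~P~ \ldots ~P~ M_K$ with $(M_k)$ a partition of $M$ into indifference classes, each class strictly preferred to the next. A mechanism is a map $\varphi$ from preference orders to lotteries over $M$; $\varphi_A(R)=\sum_{a\in A}\varphi_a(R)$. A lottery $x$ first order-stochastically dominates $y$ at $R$ if $\sum_{j: j R a} x_j \ge \sum_{j: j R a} y_j$ for all $a\in M$. A separation is a pair $(R,R')$ such that for some $\kappa$, $R'$ is obtained from $R=M_1 P\ldots P M_K$ by replacing the class $M_\kappa$ with $M^1_\kappa P' M^2_\kappa$, where $M^1_\kappa\dot\cup M^2_\kappa=M_\kappa$, leaving all other classes and their order unchanged. $\varphi$ is separation responsive if for all separations $\varphi_{M^1_\kappa}(R')\ge\varphi_{M^1_\kappa}(R)$ and $\varphi_{M^2_\kappa}(R')\le\varphi_{M^2_\kappa}(R)$; separation direct if for all separations with $\varphi_{M_k}(R)\ne\varphi_{M_k}(R')$ for some $k$, both $\varphi_{M^1_\kappa}(R')\ne\varphi_{M^1_\kappa}(R)$ and $\varphi_{M^2_\kappa}(R')\ne\varphi_{M^2_\kappa}(R)$; separation monotonic if both; separation upper (resp. lower) invariant if for all separations $\varphi_{M_k}(R)=\varphi_{M_k}(R')$ for all $k<\kappa$ (resp. all $k>\kappa$). An $L$-separation ($L\ge 2$) is a pair $(R,R')$ such that for some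 $\kappa$, $R'$ is obtained from $R$ by replacing the class $M_\kappa$ with $M^1_\kappa P' \ldots P' M^L_\kappa$, where $M_\kappa=\bigcup_{l=1}^L M^l_\kappa$ is a partition into pairwise disjoint sets, all other classes and their order unchanged. $\varphi$ is $L$-separation strategyproof if for every $L$-separation $(R,R')$: $\varphi(R)$ first order-stochastically dominates $\varphi(R')$ at $R$, and $\varphi(R')$ first order-stochastically dominates $\varphi(R)$ at $R'$. *)

theory Defs
  imports Complex_Main
begin

(* A preference order on the finite set M of alternatives is represented by the list
   [M_1, ..., M_K] of its indifference classes, best first:
   nonempty, pairwise disjoint, covering M. *)
definition pref_order :: "'a set \<Rightarrow> 'a set list \<Rightarrow> bool" where
  "pref_order M Ms \<longleftrightarrow>
     (\<forall>X\<in>set Ms. X \<noteq> {}) \<and>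
     (\<forall>i j. i < length Ms \<longrightarrow> j < length Ms \<longrightarrow> i \<noteq> j \<longrightarrow> Ms!i \<inter> Ms!j = {}) \<and>
     \<Union>(set Ms) = M"

definition weakly_pref :: "'a set list \<Rightarrow> 'a \<Rightarrow> 'a \<Rightarrow> bool" where
  "weakly_pref Ms j a \<longleftrightarrow>
     (\<exists>k l. k \<le> l \<and> l < length Ms \<and> j \<in> Ms!k \<and> a \<in> Ms!l)"

definition mechanism :: "'a set \<Rightarrow> ('a set list \<Rightarrow> 'a \<Rightarrow> real) \<Rightarrow> bool" where
  "mechanism M \<phi> \<longleftrightarrow>
     (\<forall>Ms. pref_order M Ms \<longrightarrow> (\<forall>a\<in>M. 0 \<le> \<phi> Ms a) \<and> sum (\<phi> Ms) M = 1)"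

definition fosd :: "'a set \<Rightarrow> 'a set list \<Rightarrow> ('a \<Rightarrow> real) \<Rightarrow> ('a \<Rightarrow> real) \<Rightarrow> bool" where
  "fosd M Ms x y \<longleftrightarrow>
     (\<forall>a\<in>M. sum x {j\<in>M. weakly_pref Ms j a} \<ge> sum y {j\<in>M. weakly_pref Ms j a})"

definition separation ::
  "'a set \<Rightarrow> 'a set list \<Rightarrow> 'a set list \<Rightarrow> nat \<Rightarrow> 'a set \<Rightarrow> 'a set \<Rightarrow> bool" where
  "separation M Ms Ms' \<kappa> A1 A2 \<longleftrightarrow>
     pref_order M Ms \<and> pref_order M Ms' \<and> \<kappa> < length Ms \<and>
     A1 \<union> A2 = Ms!\<kappa> \<and> A1 \<inter> A2 = {} \<and>
     Ms' = take \<kappa> Ms @ [A1, A2] @ drop (Suc \<kappa>) Ms"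

definition sep_responsive :: "'a set \<Rightarrow> ('a set list \<Rightarrow> 'a \<Rightarrow> real) \<Rightarrow> bool" where
  "sep_responsive M \<phi> \<longleftrightarrow>
     (\<forall>Ms Ms' \<kappa> A1 A2. separation M Ms Ms' \<kappa> A1 A2 \<longrightarrow>
        sum (\<phi> Ms') A1 \<ge> sum (\<phi> Ms) A1 \<and> sum (\<phi> Ms') A2 \<le> sum (\<phi> Ms) A2)"

definition sep_direct :: "'a set \<Rightarrow> ('a set list \<Rightarrow> 'a \<Rightarrow> real) \<Rightarrow> bool" where
  "sep_direct M \<phi> \<longleftrightarrow>
     (\<forall>Ms Ms' \<kappa> A1 A2. separation M Ms Ms' \<kappa> A1 A2 \<longrightarrow>
        (\<exists>k < length Ms. sum (\<phi> Ms) (Ms!k) \<noteq> sum (\<phi> Ms') (Ms!k)) \<longrightarrow>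
        sum (\<phi> Ms') A1 \<noteq> sum (\<phi> Ms) A1 \<and> sum (\<phi> Ms') A2 \<noteq> sum (\<phi> Ms) A2)"

definition sep_monotonic :: "'a set \<Rightarrow> ('a set list \<Rightarrow> 'a \<Rightarrow> real) \<Rightarrow> bool" where
  "sep_monotonic M \<phi> \<longleftrightarrow> sep_responsive M \<phi> \<and> sep_direct M \<phi>"

definition sep_upper_invariant :: "'a set \<Rightarrow> ('a set list \<Rightarrow> 'a \<Rightarrow> real) \<Rightarrow> bool" where
  "sep_upper_invariant M \<phi> \<longleftrightarrow>
     (\<forall>Ms Ms' \<kappa> A1 A2. separation M Ms Ms' \<kappa> A1 A2 \<longrightarrow>
        (\<forall>k < \<kappa>. sum (\<phi> Ms) (Ms!k) = sum (\<phi> Ms') (Ms!k)))"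

definition sep_lower_invariant :: "'a set \<Rightarrow> ('a set list \<Rightarrow> 'a \<Rightarrow> real) \<Rightarrow> bool" where
  "sep_lower_invariant M \<phi> \<longleftrightarrow>
     (\<forall>Ms Ms' \<kappa> A1 A2. separation M Ms Ms' \<kappa> A1 A2 \<longrightarrow>
        (\<forall>k. \<kappa> < k \<longrightarrow> k < length Ms \<longrightarrow> sum (\<phi> Ms) (Ms!k) = sum (\<phi> Ms') (Ms!k)))"

definition L_separation ::
  "'a set \<Rightarrow> nat \<Rightarrow> 'a set list \<Rightarrow> 'a set list \<Rightarrow> nat \<Rightarrow> 'a set list \<Rightarrow> bool" where
  "L_separation M L Ms Ms' \<kappa> Ps \<longleftrightarrow>
     pref_order M Ms \<and> pref_order M Ms' \<and> \<kappa> < length Ms \<and>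
     length Ps = L \<and> \<Union>(set Ps) = Ms!\<kappa> \<and>
     (\<forall>i j. i < L \<longrightarrow> j < L \<longrightarrow> i \<noteq> j \<longrightarrow> Ps!i \<inter> Ps!j = {}) \<and>
     Ms' = take \<kappa> Ms @ Ps @ drop (Suc \<kappa>) Ms"

definition L_sep_strategyproof :: "'a set \<Rightarrow> nat \<Rightarrow> ('a set list \<Rightarrow> 'a \<Rightarrow> real) \<Rightarrow> bool" where
  "L_sep_strategyproof M L \<phi> \<longleftrightarrow>
     (\<forall>Ms Ms' \<kappa> Ps. L_separation M L Ms Ms' \<kappa> Ps \<longrightarrow>
        fosd M Ms (\<phi> Ms) (\<phi> Ms') \<and> fosd M Ms' (\<phi> Ms') (\<phi> Ms))"

end

(*
  Upper and lower invariance fix the mass of every class other than the split one under a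
  separation, and since the total mass is 1 they fix the split class as well. An L-separation
  is a chain of separations (split off the first piece, then refine the rest), so it leaves the
  mass of every original class unchanged. Hence the two lotteries agree on every upper contour
  set of R, and on every upper contour set of R' that does not cut through the split class.
  The remaining upper sets of R' consist of the classes above M_kappa together with the union U
  of the first m pieces. Separating M_kappa into U above the rest raises the mass of U by
  responsiveness, and refining both parts further into the pieces of R' changes no class mass.
*)
theory Submission
  imports Defs
begin

definition disjoint_list :: "'a set list \<Rightarrow> bool" where
  "disjoint_list Xs \<longleftrightarrow>
     (\<forall>i j. i < length Xs \<longrightarrow> j < length Xs \<longrightarrow> i \<noteq> j \<longrightarrow> Xs!i \<inter> Xs!j = {})"

lemma disjoint_list_Nil [simp]: "disjoint_list []"
  by (simp add: disjoint_list_def)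

lemma disjoint_list_Cons [simp]:
  "disjoint_list (X # Xs) \<longleftrightarrow> X \<inter> \<Union>(set Xs) = {} \<and> disjoint_list Xs"
  (is "?lhs \<longleftrightarrow> ?rhs")
proof
  assume ?lhs
  then have "(X # Xs)!i \<inter> (X # Xs)!j = {}"
    if "i < Suc (length Xs)" "j < Suc (length Xs)" "i \<noteq> j" for i j
    using that unfolding disjoint_list_def by simp
  from this[of 0 "Suc _"] this[of "Suc _" "Suc _"] show ?rhs
    by (auto simp: disjoint_list_def in_set_conv_nth disjoint_iff)
next
  assume ?rhs
  then show ?lhs
    unfolding disjoint_list_def by (auto simp: nth_Cons disjoint_iff split: nat.splits)
qed

lemma disjoint_list_append [simp]:
  "disjoint_list (Xs @ Ys) \<longleftrightarrow>
     disjoint_list Xs \<and> disjoint_list Ys \<and> \<Union>(set Xs) \<inter> \<Union>(set Ys) = {}"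
  by (induction Xs) auto

lemma sum_Union_disjoint_list:
  assumes "disjoint_list Xs" "\<forall>X\<in>set Xs. finite X"
  shows "sum f (\<Union>(set Xs)) = (\<Sum>X\<leftarrow>Xs. sum f X)"
  using assms by (induction Xs) (auto simp: sum.union_disjoint)

lemma pref_order_iff:
  "pref_order M Ms \<longleftrightarrow> (\<forall>X\<in>set Ms. X \<noteq> {}) \<and> disjoint_list Ms \<and> \<Union>(set Ms) = M"
  unfolding pref_order_def disjoint_list_def ..

lemma pref_order_merge_classes:
  assumes "pref_order M (As @ Ps @ Cs)" "Ps \<noteq> []"
  shows "pref_order M (As @ [\<Union>(set Ps)] @ Cs)"
  using assms by (auto simp: pref_order_iff neq_Nil_conv)

lemma sum_Union_take:
  assumes "finite M" "pref_order M Ms"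
  shows "sum f (\<Union>(set (take j Ms))) = (\<Sum>X\<leftarrow>take j Ms. sum f X)"
proof (rule sum_Union_disjoint_list)
  have "disjoint_list (take j Ms @ drop j Ms)"
    using assms(2) by (simp add: pref_order_iff)
  then show "disjoint_list (take j Ms)" by (simp del: append_take_drop_id)
  show "\<forall>X\<in>set (take j Ms). finite X"
    using assms by (auto simp: pref_order_iff intro: finite_subset dest: in_set_takeD)
qed

lemma upper_contour_set_eq_Union_take:
  assumes "pref_order M Ms" "c < length Ms" "a \<in> Ms!c"
  shows "{j\<in>M. weakly_pref Ms j a} = \<Union>(set (take (Suc c) Ms))"
proof -
  have disj: "disjoint_list Ms" and cover: "\<Union>(set Ms) = M"
    using assms(1) by (auto simp: pref_order_iff)
  have "weakly_pref Ms j a \<longleftrightarrow> (\<exists>k\<le>c. j \<in> Ms!k)" for j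
    using assms(2,3) disj unfolding weakly_pref_def disjoint_list_def by blast
  moreover have "\<Union>(set (take (Suc c) Ms)) = {j. \<exists>k\<le>c. j \<in> Ms!k}"
    using assms(2) by (auto simp flip: nth_image simp: less_Suc_eq_le)
  ultimately show ?thesis
    using assms(2) cover by auto
qed

lemma fosdI:
  assumes "pref_order M Ms"
    and "\<And>j. sum y (\<Union>(set (take j Ms))) \<le> sum x (\<Union>(set (take j Ms)))"
  shows "fosd M Ms x y"
  unfolding fosd_def
proof
  fix a assume "a \<in> M"
  then obtain c where "c < length Ms" "a \<in> Ms!c"
    using assms(1) by (auto simp: pref_order_iff in_set_conv_nth)
  then show "sum y {j\<in>M. weakly_pref Ms j a} \<le> sum x {j\<in>M. weakly_pref Ms j a}"
    using assms(2) upper_contour_set_eq_Union_take[OF assms(1)] by simp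
qed

abbreviation replace_class :: "nat \<Rightarrow> 'a list \<Rightarrow> 'a list \<Rightarrow> 'a list" where
  "replace_class \<kappa> Ps Ms \<equiv> take \<kappa> Ms @ Ps @ drop (Suc \<kappa>) Ms"

lemma nth_mem_replace_class:
  assumes "k < length Ms" "k \<noteq> \<kappa>"
  shows "Ms!k \<in> set (replace_class \<kappa> Ps Ms)"
proof (cases "k < \<kappa>")
  case True
  then have "Ms!k = take \<kappa> Ms ! k" "k < length (take \<kappa> Ms)" using assms by auto
  then show ?thesis by (metis Un_iff nth_mem set_append)
next
  case False
  then have "Ms!k = drop (Suc \<kappa>) Ms ! (k - Suc \<kappa>)" "k - Suc \<kappa> < length (drop (Suc \<kappa>) Ms)"
    using assms by auto
  then show ?thesis by (metis Un_iff nth_mem set_append)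
qed

lemma L_separation_iff:
  "L_separation M L Ms Ms' \<kappa> Ps \<longleftrightarrow>
     pref_order M Ms \<and> pref_order M Ms' \<and> \<kappa> < length Ms \<and> length Ps = L \<and>
     \<Union>(set Ps) = Ms!\<kappa> \<and> disjoint_list Ps \<and> Ms' = replace_class \<kappa> Ps Ms"
  unfolding L_separation_def disjoint_list_def by auto

lemma separation_imp_L_separation:
  "separation M Ms Ms' \<kappa> A1 A2 \<Longrightarrow> L_separation M 2 Ms Ms' \<kappa> [A1, A2]"
  by (auto simp: separation_def L_separation_iff)

lemma take_L_separation_above_split:
  "L_separation M L Ms Ms' \<kappa> Ps \<Longrightarrow> j \<le> \<kappa> \<Longrightarrow> take j Ms' = take j Ms"
  by (auto simp: L_separation_iff)

lemma Union_take_L_separation_below_split: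
  assumes "L_separation M L Ms Ms' \<kappa> Ps" "\<kappa> + L \<le> j"
  shows "\<Union>(set (take j Ms')) = \<Union>(set (take (j + 1 - L) Ms))"
proof -
  from assms(1) have \<kappa>: "\<kappa> < length Ms" and L: "length Ps = L" and cover: "\<Union>(set Ps) = Ms!\<kappa>"
    and Ms': "Ms' = replace_class \<kappa> Ps Ms"
    by (auto simp: L_separation_iff)
  define i where "i = j - \<kappa> - L"
  have "take j Ms' = take \<kappa> Ms @ Ps @ take i (drop (Suc \<kappa>) Ms)"
    using Ms' \<kappa> L assms(2) by (simp add: i_def)
  moreover have "take (j + 1 - L) Ms = take \<kappa> Ms @ [Ms!\<kappa>] @ take i (drop (Suc \<kappa>) Ms)"
    using take_add[of "Suc \<kappa>" i Ms] take_Suc_conv_app_nth[OF \<kappa>] assms(2)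
    by (simp add: i_def Suc_diff_le)
  ultimately show ?thesis using cover by auto
qed

lemma L_separation_factorization:
  assumes sep: "L_separation M L Ms Ms' \<kappa> Ps" and m: "0 < m" "m < L"
  defines "U \<equiv> \<Union>(set (take m Ps))" and "Q \<equiv> \<Union>(set (drop m Ps))"
  defines "R \<equiv> replace_class \<kappa> [U, Q] Ms"
  defines "R2 \<equiv> replace_class (Suc \<kappa>) (drop m Ps) R"
  shows "separation M Ms R \<kappa> U Q"
    and "L_separation M (L - m) R R2 (Suc \<kappa>) (drop m Ps)"
    and "L_separation M m R2 Ms' \<kappa> (take m Ps)"
proof -
  from sep have po: "pref_order M Ms" and po': "pref_order M Ms'" and \<kappa>: "\<kappa> < length Ms"
    and L: "length Ps = L" and cover: "\<Union>(set Ps) = Ms!\<kappa>" and disj: "disjoint_list Ps"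
    and Ms': "Ms' = take \<kappa> Ms @ take m Ps @ drop m Ps @ drop (Suc \<kappa>) Ms"
    by (auto simp: L_separation_iff)
  have R2_eq: "R2 = take \<kappa> Ms @ [U] @ drop m Ps @ drop (Suc \<kappa>) Ms"
    using \<kappa> by (simp add: R2_def R_def)
  have parts_ne: "take m Ps \<noteq> []" "drop m Ps \<noteq> []" using m L by auto
  have po_R2: "pref_order M R2"
    using pref_order_merge_classes[of M "take \<kappa> Ms" "take m Ps"] po' parts_ne
    by (simp add: Ms' R2_eq U_def)
  have po_R: "pref_order M R"
    using pref_order_merge_classes[of M "take \<kappa> Ms @ [U]" "drop m Ps"] po_R2 parts_ne
    by (simp add: R2_eq R_def Q_def)
  have "U \<union> Q = Ms!\<kappa>"
    using cover by (metis U_def Q_def Union_Un_distrib append_take_drop_id set_append)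
  moreover have disj_parts: "disjoint_list (take m Ps)" "disjoint_list (drop m Ps)" "U \<inter> Q = {}"
    using disj append_take_drop_id[of m Ps] disjoint_list_append unfolding U_def Q_def by metis+
  ultimately show "separation M Ms R \<kappa> U Q"
    using po po_R \<kappa> by (simp add: separation_def R_def)
  show "L_separation M (L - m) R R2 (Suc \<kappa>) (drop m Ps)"
    using po_R po_R2 \<kappa> L disj_parts by (auto simp: L_separation_iff R_def R2_def Q_def nth_append)
  show "L_separation M m R2 Ms' \<kappa> (take m Ps)"
    using po_R2 po' \<kappa> L m disj_parts by (auto simp: L_separation_iff R2_eq Ms' U_def nth_append)
qed

context
  fixes M :: "'a set" and \<phi> :: "'a set list \<Rightarrow> 'a \<Rightarrow> real"
  assumes fin: "finite M" and mech: "mechanism M \<phi>"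
begin

lemma class_masses_sum_one:
  assumes "pref_order M Ms" "pref_order M Ms'"
  shows "(\<Sum>k<length Ms. sum (\<phi> Ms') (Ms!k)) = 1"
proof -
  have "(\<Sum>k<length Ms. sum (\<phi> Ms') (Ms!k)) = sum (\<phi> Ms') (\<Union>(set Ms))"
    using sum_Union_take[OF fin assms(1), of "\<phi> Ms'" "length Ms"]
    by (simp add: sum_list_sum_nth atLeast0LessThan)
  also have "\<dots> = 1"
    using assms mech by (simp add: pref_order_iff mechanism_def)
  finally show ?thesis .
qed

lemma class_mass_determined_by_others:
  assumes "pref_order M Ms" "pref_order M Ms'" "\<kappa> < length Ms"
    and "\<And>k. k < length Ms \<Longrightarrow> k \<noteq> \<kappa> \<Longrightarrow> sum (\<phi> Ms') (Ms!k) = sum (\<phi> Ms) (Ms!k)"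
  shows "sum (\<phi> Ms') (Ms!\<kappa>) = sum (\<phi> Ms) (Ms!\<kappa>)"
proof -
  have "(\<Sum>k\<in>{..<length Ms} - {\<kappa>}. sum (\<phi> Ms') (Ms!k)) =
        (\<Sum>k\<in>{..<length Ms} - {\<kappa>}. sum (\<phi> Ms) (Ms!k))"
    by (rule sum.cong) (auto simp: assms(4))
  moreover have "(\<Sum>k<length Ms. sum (\<phi> Ms') (Ms!k)) = (\<Sum>k<length Ms. sum (\<phi> Ms) (Ms!k))"
    using class_masses_sum_one[OF assms(1)] assms(1,2) by simp
  ultimately show ?thesis
    using assms(3) by (simp add: sum.remove)
qed

context
  assumes up: "sep_upper_invariant M \<phi>" and low: "sep_lower_invariant M \<phi>"
begin

lemma separation_preserves_class_masses:
  assumes sep: "separation M Ms Ms' \<kappa> A1 A2" and "k < length Ms"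
  shows "sum (\<phi> Ms') (Ms!k) = sum (\<phi> Ms) (Ms!k)"
proof -
  have others: "sum (\<phi> Ms') (Ms!i) = sum (\<phi> Ms) (Ms!i)" if "i < length Ms" "i \<noteq> \<kappa>" for i
    using up low sep that unfolding sep_upper_invariant_def sep_lower_invariant_def
    by (metis linorder_neqE_nat)
  have "pref_order M Ms" "pref_order M Ms'" "\<kappa> < length Ms"
    using sep by (auto simp: separation_def)
  then show ?thesis
    using class_mass_determined_by_others[of Ms Ms' \<kappa>] others assms(2)
    by (cases "k = \<kappa>") simp_all
qed

lemma L_separation_preserves_class_masses:
  assumes "L_separation M L Ms Ms' \<kappa> Ps" "X \<in> set Ms"
  shows "sum (\<phi> Ms') X = sum (\<phi> Ms) X"
  using assms
proof (induction Ps arbitrary: L Ms Ms' \<kappa> X)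
  case Nil
  then have "pref_order M Ms" "\<kappa> < length Ms" "Ms!\<kappa> = {}"
    by (auto simp: L_separation_iff)
  then show ?case by (metis nth_mem pref_order_iff)
next
  case (Cons Y Ps)
  then have po: "pref_order M Ms" and po': "pref_order M Ms'" and \<kappa>: "\<kappa> < length Ms"
    and cover: "Y \<union> \<Union>(set Ps) = Ms!\<kappa>" and disj: "Y \<inter> \<Union>(set Ps) = {}" "disjoint_list Ps"
    and Ms': "Ms' = replace_class \<kappa> (Y # Ps) Ms"
    by (auto simp: L_separation_iff)
  show ?case
  proof (cases "Ps = []")
    case True
    then have "Ms' = Ms" using Ms' cover \<kappa> by (simp add: id_take_nth_drop[symmetric])
    then show ?thesis by simp
  next
    case False
    define R where "R = replace_class \<kappa> [Y, \<Union>(set Ps)] Ms"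
    have "pref_order M R"
      using pref_order_merge_classes[of M "take \<kappa> Ms @ [Y]" Ps] po' Ms' False
      by (simp add: R_def)
    then have sep: "separation M Ms R \<kappa> Y (\<Union>(set Ps))"
      using po \<kappa> cover disj by (simp add: separation_def R_def)
    have "L_separation M (length Ps) R Ms' (Suc \<kappa>) Ps"
      using \<open>pref_order M R\<close> po' \<kappa> cover disj Ms' by (simp add: L_separation_iff R_def nth_append)
    then have R_Ms': "sum (\<phi> Ms') Z = sum (\<phi> R) Z" if "Z \<in> set R" for Z
      using Cons.IH that by blast
    have "sum (\<phi> Ms') (Ms!k) = sum (\<phi> Ms) (Ms!k)" if "k < length Ms" "k \<noteq> \<kappa>" for k
      using R_Ms' nth_mem_replace_class[OF that, of "[Y, \<Union>(set Ps)]"]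
        separation_preserves_class_masses[OF sep that(1)] by (simp add: R_def)
    then have "sum (\<phi> Ms') (Ms!k) = sum (\<phi> Ms) (Ms!k)" if "k < length Ms" for k
      using class_mass_determined_by_others[OF po po' \<kappa>] that by (cases "k = \<kappa>") simp_all
    then show ?thesis using Cons.prems(2) by (auto simp: in_set_conv_nth)
  qed
qed

lemma L_separation_preserves_prefix_masses:
  assumes "L_separation M L Ms Ms' \<kappa> Ps"
  shows "sum (\<phi> Ms') (\<Union>(set (take j Ms))) = sum (\<phi> Ms) (\<Union>(set (take j Ms)))"
proof -
  have po: "pref_order M Ms" using assms by (simp add: L_separation_iff)
  have "sum (\<phi> Ms') X = sum (\<phi> Ms) X" if "X \<in> set (take j Ms)" for X
    using L_separation_preserves_class_masses[OF assms] that by (meson in_set_takeD)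
  then show ?thesis by (simp add: sum_Union_take[OF fin po] cong: map_cong)
qed

lemma L_separation_top_parts_mass_mono:
  assumes resp: "sep_responsive M \<phi>" and sep: "L_separation M L Ms Ms' \<kappa> Ps"
    and m: "0 < m" "m < L"
  shows "sum (\<phi> Ms) (\<Union>(set (take (\<kappa> + m) Ms'))) \<le>
         sum (\<phi> Ms') (\<Union>(set (take (\<kappa> + m) Ms')))"
proof -
  from sep have po: "pref_order M Ms" and \<kappa>: "\<kappa> < length Ms" and L: "length Ps = L"
    and Ms': "Ms' = replace_class \<kappa> Ps Ms"
    by (auto simp: L_separation_iff)
  define U where "U = \<Union>(set (take m Ps))"
  define R where "R = replace_class \<kappa> [U, \<Union>(set (drop m Ps))] Ms"
  define R2 where "R2 = replace_class (Suc \<kappa>) (drop m Ps) R"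
  have sep_R: "separation M Ms R \<kappa> U (\<Union>(set (drop m Ps)))"
    and sep_R2: "L_separation M (L - m) R R2 (Suc \<kappa>) (drop m Ps)"
    and sep_Ms': "L_separation M m R2 Ms' \<kappa> (take m Ps)"
    using L_separation_factorization[OF sep m] by (simp_all add: U_def R_def R2_def)
  have po_R: "pref_order M R" using sep_R by (auto simp: separation_def)
  define T where "T = \<Union>(set (take \<kappa> Ms))"
  define P where "P = \<Union>(set (take (Suc \<kappa>) R))"
  have top: "take (Suc \<kappa>) R = take \<kappa> Ms @ [U]" "take (Suc \<kappa>) R2 = take \<kappa> Ms @ [U]"
    using \<kappa> by (simp_all add: R_def R2_def)
  have P_eq: "\<Union>(set (take (\<kappa> + m) Ms')) = P"
    using \<kappa> m L by (auto simp: Ms' P_def top U_def)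
  have split: "sum f P = sum f T + sum f U" for f
    using sum_Union_take[OF fin po_R, of f "Suc \<kappa>"] sum_Union_take[OF fin po, of f \<kappa>]
    by (simp add: P_def T_def top)
  have "sum (\<phi> Ms) P = sum (\<phi> Ms) T + sum (\<phi> Ms) U"
    by (rule split)
  also have "\<dots> \<le> sum (\<phi> R) T + sum (\<phi> R) U"
    using L_separation_preserves_prefix_masses[OF separation_imp_L_separation[OF sep_R], of \<kappa>]
      resp sep_R by (simp add: T_def sep_responsive_def)
  also have "\<dots> = sum (\<phi> R) P"
    by (rule split[symmetric])
  also have "\<dots> = sum (\<phi> R2) P"
    using L_separation_preserves_prefix_masses[OF sep_R2] by (simp add: P_def)
  also have "\<dots> = sum (\<phi> Ms') P"
    using L_separation_preserves_prefix_masses[OF sep_Ms', of "Suc \<kappa>"] by (simp add: P_def top)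
  finally show ?thesis
    using P_eq by simp
qed

lemma L_separation_prefix_mass_mono:
  assumes resp: "sep_responsive M \<phi>" and sep: "L_separation M L Ms Ms' \<kappa> Ps"
  shows "sum (\<phi> Ms) (\<Union>(set (take j Ms'))) \<le> sum (\<phi> Ms') (\<Union>(set (take j Ms')))"
proof -
  consider "j \<le> \<kappa>" | "\<kappa> < j" "j < \<kappa> + L" | "\<kappa> + L \<le> j" by linarith
  then show ?thesis
  proof cases
    case 1
    then show ?thesis
      using L_separation_preserves_prefix_masses[OF sep] take_L_separation_above_split[OF sep] by simp
  next
    case 2
    then show ?thesis
      using L_separation_top_parts_mass_mono[OF resp sep, of "j - \<kappa>"] by simp
  next
    case 3
    then show ?thesis
      using L_separation_preserves_prefix_masses[OF sep] Union_take_L_separation_below_split[OF sep]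
      by simp
  qed
qed

end

end

theorem lemma5:
  fixes M :: "'a set" and \<phi> :: "'a set list \<Rightarrow> 'a \<Rightarrow> real" and L :: nat
  assumes "finite M"
    and "mechanism M \<phi>"
    and "sep_monotonic M \<phi>"
    and "sep_upper_invariant M \<phi>"
    and "sep_lower_invariant M \<phi>"
    and "2 \<le> L"
  shows "L_sep_strategyproof M L \<phi>"
  unfolding L_sep_strategyproof_def
proof (intro allI impI conjI)
  fix Ms Ms' \<kappa> Ps
  assume sep: "L_separation M L Ms Ms' \<kappa> Ps"
  have resp: "sep_responsive M \<phi>"
    using assms(3) by (simp add: sep_monotonic_def)
  have "pref_order M Ms" "pref_order M Ms'"
    using sep by (auto simp: L_separation_iff)
  then show "fosd M Ms (\<phi> Ms) (\<phi> Ms')" "fosd M Ms' (\<phi> Ms') (\<phi> Ms)"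
    using L_separation_preserves_prefix_masses[OF assms(1,2,4,5) sep]
      L_separation_prefix_mass_mono[OF assms(1,2,4,5) resp sep]
    by (simp_all add: fosdI)
qed

end
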